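(* Let $G$ be a finite solvable group with $\mathcal{I}(G)\neq G$. Then $\Sigma(G)\neq\emptyset$, i.e. $G$ contains an element whose order is divisible by at least two distinct primes.
   Context: For a finite group $G$, let $\widetilde{\Gamma}(G)$ be the graph with vertex set $G$ in which two distinct elements $x,y$ are adjacent if and only if $|\langle x,y\rangle|$ is divisible by at least three distinct primes. $\mathcal{I}(G)$ denotes the set of isolated vertices of $\widetilde{\Gamma}(G)$. $\Sigma(G)$ denotes the set of elements $g\in G$ whose order is divisible by at least two distinct primes. *)

theory Defs
  imports "HOL-Algebra.Algebra"
begin

definition num_prime_divisors :: "nat \<Rightarrow> nat" where
  "num_prime_divisors n = card {p. Factorial_Ring.prime p \<and> p dvd n}"

definition tgamma_adj :: "('a, 'b) monoid_scheme \<Rightarrow> 'a \<Rightarrow> 'a \<Rightarrow> bool" where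
  "tgamma_adj G x y \<longleftrightarrow> x \<in> carrier G \<and> y \<in> carrier G \<and> x \<noteq> y \<and>
     num_prime_divisors (card (generate G {x, y})) \<ge> 3"

definition isolated_vertices :: "('a, 'b) monoid_scheme \<Rightarrow> 'a set" where
  "isolated_vertices G = {x \<in> carrier G. \<forall>y \<in> carrier G. \<not> tgamma_adj G x y}"

definition Sigma_set :: "('a, 'b) monoid_scheme \<Rightarrow> 'a set" where
  "Sigma_set G = {g \<in> carrier G. num_prime_divisors (group.ord G g) \<ge> 2}"

end

theory Submission
  imports Defs
begin

(* Sigma_set G = {} says that every element of G has prime power order (G is an EPPO group),
   while a non-isolated vertex x with neighbour y gives a subgroup generate G {x, y} whose order
   has three prime divisors. So it suffices to prove Higman's theorem: the order of a solvable
   EPPO group has at most two prime divisors.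

   The last nontrivial term V of the derived series is abelian, hence a p-group for one prime p.
   Let q and r be two further prime divisors of the order. An abelian derived factor of order
   divisible by q r would contain an element of order q r, whose preimages in G have order
   divisible by q r; so q and r leave the derived series at different steps, and some term M of
   it has order divisible by q but not by r.
   A Frattini argument then yields a nontrivial r-subgroup H normalising a nontrivial q-subgroup Q.

   For v in V, let N_S(v) be the product, taken in V, of the conjugates k v k^-1 with k in S.
   If a nontrivial q- or r-element a satisfies a S = S, then a commutes with the p-element
   N_S(v), so N_S(v) = 1. This applies to S = Q, to S = Q H and to the conjugates x H x^-1. As no
   nontrivial element of Q commutes with one of H, Q H is the disjoint union of Q and of the sets
   x H x^-1 - {1} with x in Q. Hence 1 = N_(Q H)(v) = (v^-1)^(card Q), which forces v = 1. *)

section \<open>Prime divisors of natural numbers\<close>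

lemma num_prime_divisors_ge_2:
  fixes n p q :: nat
  assumes "n > 0" "Factorial_Ring.prime p" "Factorial_Ring.prime q" "p \<noteq> q" "p dvd n" "q dvd n"
  shows "num_prime_divisors n \<ge> 2"
proof -
  have "finite {p. Factorial_Ring.prime p \<and> p dvd n}"
    using assms(1) by (auto intro: finite_subset[of _ "{..n}"] dest: dvd_imp_le)
  moreover have "{p, q} \<subseteq> {p. Factorial_Ring.prime p \<and> p dvd n}"
    using assms by auto
  ultimately have "card {p, q} \<le> num_prime_divisors n"
    unfolding num_prime_divisors_def by (rule card_mono)
  then show ?thesis
    using assms(4) by simp
qed

lemma num_prime_divisors_mono:
  fixes m n :: nat
  assumes "m dvd n" "n > 0"
  shows "num_prime_divisors m \<le> num_prime_divisors n"
  unfolding num_prime_divisors_def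
proof (rule card_mono)
  show "finite {p. Factorial_Ring.prime p \<and> p dvd n}"
    using assms(2) by (auto intro: finite_subset[of _ "{..n}"] dest: dvd_imp_le)
  show "{p. Factorial_Ring.prime p \<and> p dvd m} \<subseteq> {p. Factorial_Ring.prime p \<and> p dvd n}"
    using assms(1) dvd_trans by blast
qed

lemma prime_power_if_unique_prime_divisor:
  fixes n p :: nat
  assumes "n > 0" and unique: "\<And>t. Factorial_Ring.prime t \<Longrightarrow> t dvd n \<Longrightarrow> t = p"
  shows "\<exists>k. n = p ^ k"
proof (cases "n = 1")
  case True
  then show ?thesis
    by (metis power_0)
next
  case False
  then have "Factorial_Ring.prime p"
    using prime_factor_nat unique by blast
  moreover have "n \<noteq> 0"
    using assms(1) by simp
  ultimately obtain m where n: "n = p ^ multiplicity p n * m" and "\<not> p dvd m"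
    using multiplicity_decompose' by (metis not_prime_unit)
  have "m = 1"
  proof (rule ccontr)
    assume "m \<noteq> 1"
    then obtain t where "Factorial_Ring.prime t" "t dvd m"
      using prime_factor_nat by blast
    moreover have "t dvd n"
      using \<open>t dvd m\<close> n by (metis dvd_triv_right dvd_trans)
    ultimately show False
      using unique \<open>\<not> p dvd m\<close> by blast
  qed
  then show ?thesis
    using n by auto
qed

section \<open>Element orders\<close>

context group
begin

lemma inv_mult_cancel_left [simp]:
  "x \<in> carrier G \<Longrightarrow> y \<in> carrier G \<Longrightarrow> inv x \<otimes> (x \<otimes> y) = y"
  by (simp add: m_assoc[symmetric])

lemma mult_inv_cancel_left [simp]:
  "x \<in> carrier G \<Longrightarrow> y \<in> carrier G \<Longrightarrow> x \<otimes> (inv x \<otimes> y) = y"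
  by (simp add: m_assoc[symmetric])

definition p_element :: "nat \<Rightarrow> 'a \<Rightarrow> bool"
  where "p_element p x \<longleftrightarrow> x \<in> carrier G \<and> (\<exists>k. ord x = p ^ k)"

lemma p_element_if_ord_dvd:
  assumes "Factorial_Ring.prime p" "x \<in> carrier G" "ord x dvd p ^ k"
  shows "p_element p x"
  using assms divides_primepow_nat unfolding p_element_def by blast

lemma p_element_eq_one:
  assumes "Factorial_Ring.prime p" "Factorial_Ring.prime q" "p \<noteq> q"
    and "p_element p x" "p_element q x"
  shows "x = \<one>"
  using assms prime_power_inj''[of p q] ord_eq_1 unfolding p_element_def by (metis power_0)

lemma coprime_ord_p_elements:
  assumes "Factorial_Ring.prime p" "Factorial_Ring.prime q" "p \<noteq> q"
    and "p_element p x" "p_element q y"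
  shows "coprime (ord x) (ord y)"
  using assms primes_coprime[of p q] unfolding p_element_def by auto

lemma ord_dvd_card_subgroup:
  assumes "subgroup H G" "x \<in> H"
  shows "ord x dvd card H"
proof -
  interpret H: group "G\<lparr>carrier := H\<rparr>"
    using subgroup.subgroup_is_group[OF assms(1) is_group] .
  have "x [^]\<^bsub>G\<lparr>carrier := H\<rparr>\<^esub> order (G\<lparr>carrier := H\<rparr>) = \<one>"
    using H.pow_order_eq_1 assms(2) by simp
  then have "x [^] card H = \<one>"
    by (simp add: order_def nat_pow_consistent[symmetric])
  then show ?thesis
    using pow_eq_id subgroup.mem_carrier[OF assms] by blast
qed

lemma p_element_if_mem_p_subgroup:
  assumes "Factorial_Ring.prime p" "subgroup H G" "card H = p ^ e" "x \<in> H"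
  shows "p_element p x"
  using assms ord_dvd_card_subgroup p_element_if_ord_dvd subgroup.mem_carrier by metis

lemma subgroup_nontrivial_elem:
  assumes "subgroup H G" "card H \<noteq> 1"
  obtains h where "h \<in> H" "h \<noteq> \<one>"
proof -
  have "H \<noteq> {\<one>}"
    using assms(2) by auto
  then show ?thesis
    using that subgroup.one_closed[OF assms(1)] by blast
qed

lemma p_subgroup_nontrivial_elem:
  assumes "Factorial_Ring.prime p" "subgroup H G" "card H = p ^ f" "f > 0"
  obtains h where "h \<in> H" "h \<noteq> \<one>"
proof -
  have "p \<noteq> 1"
    using assms(1) by auto
  then have "card H \<noteq> 1"
    using assms(3,4) by simp
  then show ?thesis
    using subgroup_nontrivial_elem[OF assms(2)] that by blast
qed

lemma exists_ord_eq_prime: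
  assumes "finite (carrier G)" "Factorial_Ring.prime p" "p dvd order G"
  obtains x where "x \<in> carrier G" "ord x = p"
proof -
  obtain m where "order G = p ^ 1 * m"
    using assms(3) by (auto simp: dvd_def)
  then obtain H where H: "subgroup H G" "card H = p"
    using sylow_thm[OF assms(2) is_group _ assms(1)] by (metis power_one_right)
  obtain x where x: "x \<in> H" "x \<noteq> \<one>"
    using subgroup_nontrivial_elem[OF H(1)] H(2) assms(2) by (metis not_prime_1)
  have "ord x dvd p" "ord x \<noteq> 1"
    using ord_dvd_card_subgroup[OF H(1) x(1)] H(2) ord_eq_1 subgroup.mem_carrier[OF H(1) x(1)] x(2)
    by auto
  then have "ord x = p"
    using assms(2) prime_nat_iff by blast
  then show ?thesis
    using that subgroup.mem_carrier[OF H(1) x(1)] by blast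
qed

lemma nat_pow_conj:
  assumes "g \<in> carrier G" "x \<in> carrier G"
  shows "(g \<otimes> x \<otimes> inv g) [^] (n::nat) = g \<otimes> x [^] n \<otimes> inv g"
proof (induction n)
  case 0
  then show ?case using assms by simp
next
  case (Suc n)
  then show ?case using assms by (simp add: m_assoc)
qed

lemma ord_conj:
  assumes "g \<in> carrier G" "x \<in> carrier G"
  shows "ord (g \<otimes> x \<otimes> inv g) = ord x"
proof -
  have "(g \<otimes> x \<otimes> inv g) [^] n = \<one> \<longleftrightarrow> x [^] n = \<one>" for n :: nat
    using assms conjugation_is_inj[of g "x [^] n" \<one>] by (auto simp: nat_pow_conj)
  then show ?thesis
    using assms by (simp add: ord_unique pow_eq_id)
qed

lemma p_element_conj:
  assumes "g \<in> carrier G" "p_element p x"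
  shows "p_element p (g \<otimes> x \<otimes> inv g)"
  using assms ord_conj unfolding p_element_def by simp

lemma ord_mult_coprime:
  assumes x: "x \<in> carrier G" and y: "y \<in> carrier G"
    and comm: "x \<otimes> y = y \<otimes> x" and cop: "coprime (ord x) (ord y)"
  shows "ord (x \<otimes> y) = ord x * ord y"
proof -
  define n where "n = ord (x \<otimes> y)"
  have "x [^] n \<otimes> y [^] n = \<one>"
    using pow_mult_distrib[OF comm x y, symmetric] x y unfolding n_def by simp
  then have xn: "x [^] n = inv (y [^] n)"
    using x y inv_equality[of "x [^] n" "y [^] n"] by simp
  \<comment> \<open>\<open>x [^] n\<close> lies in both cyclic groups, whose orders are coprime\<close>
  have "(x [^] n) [^] ord x = \<one>"
    using x by (simp add: nat_pow_pow pow_eq_id)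
  moreover have "(x [^] n) [^] ord y = \<one>"
    using y by (simp add: xn nat_pow_inv nat_pow_pow pow_eq_id)
  ultimately have "ord (x [^] n) dvd 1"
    using x cop coprime_common_divisor pow_eq_id nat_pow_closed by blast
  then have "x [^] n = \<one>"
    using x ord_eq_1 by simp
  then have "y [^] n = \<one>"
    using y xn by simp
  then have "ord x dvd n" "ord y dvd n"
    using x y \<open>x [^] n = \<one>\<close> pow_eq_id by blast+
  then have "ord x * ord y dvd n"
    using cop by (simp add: divides_mult)
  moreover have "n dvd ord x * ord y"
    using ord_mul_divides[OF comm x y] unfolding n_def .
  ultimately show ?thesis
    unfolding n_def by (rule dvd_antisym[symmetric])
qed

lemma ord_subgroup_eq:
  assumes "subgroup H G" "x \<in> H"
  shows "group.ord (G\<lparr>carrier := H\<rparr>) x = ord x"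
proof -
  interpret H: group "G\<lparr>carrier := H\<rparr>"
    using subgroup.subgroup_is_group[OF assms(1) is_group] .
  have "x \<in> carrier G"
    using subgroup.mem_carrier[OF assms] .
  then show ?thesis
    using H.ord_unique[of x "ord x"] assms(2) pow_eq_id
    by (simp add: nat_pow_consistent[symmetric])
qed

lemma pow_mult_normal:
  assumes "N \<lhd> G" "y \<in> N" "g \<in> carrier G"
  shows "\<exists>w\<in>N. (y \<otimes> g) [^] (k::nat) = w \<otimes> g [^] k"
proof (induction k)
  case 0
  then show ?case
    using normal_imp_subgroup[OF assms(1)] subgroup.one_closed subgroup.mem_carrier by force
next
  case (Suc k)
  then obtain w where w: "w \<in> N" "(y \<otimes> g) [^] k = w \<otimes> g [^] k"
    by blast
  have N: "N \<subseteq> carrier G" "subgroup N G"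
    using normal_imp_subgroup[OF assms(1)] subgroup.subset by blast+
  \<comment> \<open>move \<open>y\<close> to the left past \<open>g [^] k\<close> by conjugation\<close>
  define w' where "w' = w \<otimes> (g [^] k \<otimes> y \<otimes> inv (g [^] k))"
  have "w' \<in> N"
    unfolding w'_def using w(1) N(2) normal_invE(2)[OF assms(1) _ assms(2)] assms(3)
    by (simp add: subgroup.m_closed)
  moreover have "(y \<otimes> g) [^] Suc k = w' \<otimes> g [^] Suc k"
    using w N(1) assms(2,3) unfolding w'_def by (simp add: subsetD m_assoc)
  ultimately show ?case
    by blast
qed

lemma prime_dvd_ord_mult_normal:
  assumes M: "M \<lhd> G" "finite M" and y: "y \<in> M"
    and g: "g \<in> carrier G" "ord g = r" "Factorial_Ring.prime r" "\<not> r dvd card M"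
  shows "r dvd ord (y \<otimes> g)"
proof -
  have M_sub: "M \<subseteq> carrier G"
    using normal_imp_subgroup[OF M(1)] subgroup.subset by blast
  define k where "k = ord (y \<otimes> g)"
  obtain w where w: "w \<in> M" "(y \<otimes> g) [^] k = w \<otimes> g [^] k"
    using pow_mult_normal[OF M(1) y g(1)] by blast
  then have "w \<otimes> g [^] k = \<one>"
    using y g(1) M_sub unfolding k_def by (simp add: subsetD)
  then have "g [^] k = inv w"
    using w(1) M_sub g(1) inv_equality[of w "g [^] k"] inv_inv by (metis nat_pow_closed subsetD)
  then have gk: "g [^] k \<in> M"
    using w(1) normal_imp_subgroup[OF M(1)] subgroup.m_inv_closed by metis
  have "ord (g [^] k) dvd card M"
    using ord_dvd_card_subgroup[OF normal_imp_subgroup[OF M(1)] gk] .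
  moreover have "ord (g [^] k) dvd r"
    using g by (metis mult.commute nat_pow_closed nat_pow_one nat_pow_pow pow_eq_id pow_ord_eq_1)
  ultimately have "ord (g [^] k) = 1"
    using g(3,4) prime_nat_iff by metis
  then have "g [^] k = \<one>"
    using ord_eq_1 g(1) by simp
  then show ?thesis
    using pow_eq_id g(1,2) unfolding k_def by simp
qed

end

lemma (in normal) ord_FactGroup_dvd:
  assumes "x \<in> carrier G"
  shows "group.ord (G Mod H) (H #> x) dvd ord x"
proof -
  interpret F: group "G Mod H"
    by (rule factorgroup_is_group)
  have "(H #> x) [^]\<^bsub>G Mod H\<^esub> ord x = \<one>\<^bsub>G Mod H\<^esub>"
    using FactGroup_pow[OF assms] assms coset_mult_one subset by simp
  moreover have "H #> x \<in> carrier (G Mod H)"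
    using assms by (simp add: carrier_FactGroup)
  ultimately show ?thesis
    using F.pow_eq_id by blast
qed

section \<open>Conjugate subgroups and Sylow subgroups\<close>

context group
begin

lemma set_mult_memI: "x \<in> A \<Longrightarrow> y \<in> B \<Longrightarrow> x \<otimes> y \<in> A <#> B"
  unfolding set_mult_def by blast

lemma card_set_mult_le:
  assumes "finite A" "finite B"
  shows "card (A <#> B) \<le> card A * card B"
proof -
  have "A <#> B = (\<lambda>(x, y). x \<otimes> y) ` (A \<times> B)"
    unfolding set_mult_def by auto
  then show ?thesis
    using card_image_le[of "A \<times> B" "\<lambda>(x, y). x \<otimes> y"] assms by (simp add: card_cartesian_product)
qed

lemma conj_image_eq_cosets:
  assumes "g \<in> carrier G" "H \<subseteq> carrier G"
  shows "(\<lambda>x. g \<otimes> x \<otimes> inv g) ` H = l_coset G g H #> inv g"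
  using assms unfolding l_coset_def r_coset_def by auto

lemma subgroup_conj_image:
  assumes "subgroup H G" "g \<in> carrier G"
  shows "subgroup ((\<lambda>x. g \<otimes> x \<otimes> inv g) ` H) G"
proof -
  have "(\<lambda>x. g \<otimes> x \<otimes> inv g) ` H = l_coset G (inv (inv g)) H #> inv g"
    using conj_image_eq_cosets[OF assms(2) subgroup.subset[OF assms(1)]] assms(2) by simp
  then show ?thesis
    using subgroup_conjugation_is_surj1[of "inv g" H] assms by simp
qed

lemma card_conj_image:
  assumes "g \<in> carrier G" "H \<subseteq> carrier G"
  shows "card ((\<lambda>x. g \<otimes> x \<otimes> inv g) ` H) = card H"
  using assms conjugation_is_inj by (intro card_image inj_onI) blast

lemma mem_normalizer_iff:
  assumes "H \<subseteq> carrier G"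
  shows "g \<in> normalizer G H \<longleftrightarrow> g \<in> carrier G \<and> (\<lambda>x. g \<otimes> x \<otimes> inv g) ` H = H"
proof -
  have "g \<in> normalizer G H \<longleftrightarrow> g \<in> carrier G \<and> l_coset G g H #> inv g = H"
    using assms unfolding normalizer_def stabilizer_def by auto
  then show ?thesis
    using assms conj_image_eq_cosets[of g H] by (cases "g \<in> carrier G") simp_all
qed

lemma mem_normalizer_if_conj_image_subset:
  assumes "finite (carrier G)" "H \<subseteq> carrier G" "g \<in> carrier G"
    and "(\<lambda>x. g \<otimes> x \<otimes> inv g) ` H \<subseteq> H"
  shows "g \<in> normalizer G H"
  using assms mem_normalizer_iff[OF assms(2)] card_conj_image[OF assms(3,2)]
  by (metis card_subset_eq finite_subset)

lemma rcosets_action: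
  assumes P: "subgroup P G"
  shows "group_action G (rcosets P) (\<lambda>g. \<lambda>C \<in> rcosets P. C #> inv g)"
proof -
  let ?E = "rcosets P"
  let ?phi = "\<lambda>g. \<lambda>C \<in> rcosets P. C #> inv g"
  have E_carrier: "C \<subseteq> carrier G" if "C \<in> ?E" for C
    using subgroup.rcosets_carrier[OF P is_group that] .
  have E_closed: "C #> a \<in> ?E" if C: "C \<in> ?E" and a: "a \<in> carrier G" for C a
  proof -
    obtain x where x: "x \<in> carrier G" "C = P #> x"
      using C unfolding RCOSETS_def by blast
    then have "C #> a = P #> (x \<otimes> a)"
      using a subgroup.subset[OF P] coset_mult_assoc by simp
    then show ?thesis
      unfolding RCOSETS_def using x(1) a by auto
  qed
  have E_mult: "C #> a #> b = C #> (a \<otimes> b)" if "C \<in> ?E" "a \<in> carrier G" "b \<in> carrier G" for C a b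
    using coset_mult_assoc E_carrier that by blast
  have bij: "?phi g \<in> Bij ?E" if g: "g \<in> carrier G" for g
  proof -
    have "bij_betw (\<lambda>C. C #> inv g) ?E ?E"
    proof (rule bij_betwI[where g = "\<lambda>C. C #> g"])
      show "(\<lambda>C. C #> inv g) \<in> ?E \<rightarrow> ?E" "(\<lambda>C. C #> g) \<in> ?E \<rightarrow> ?E"
        using g E_closed by auto
      show "C #> inv g #> g = C" "C #> g #> inv g = C" if "C \<in> ?E" for C
        using that g E_mult E_carrier coset_mult_one by simp_all
    qed
    then have "bij_betw (?phi g) ?E ?E"
      by (rule bij_betw_cong[THEN iffD1, rotated]) simp
    then show ?thesis
      unfolding Bij_def by simp
  qed
  have "?phi \<in> hom G (BijGroup ?E)"
  proof (rule homI)
    show "?phi g \<in> carrier (BijGroup ?E)" if "g \<in> carrier G" for g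
      using bij that unfolding BijGroup_def by simp
    fix g h assume g: "g \<in> carrier G" and h: "h \<in> carrier G"
    have "?phi (g \<otimes> h) C = compose ?E (?phi g) (?phi h) C" for C
    proof (cases "C \<in> ?E")
      case True
      then have "C #> inv (g \<otimes> h) = C #> inv h #> inv g"
        using g h E_mult by (simp add: inv_mult_group)
      then show ?thesis
        using True E_closed h by (simp add: compose_def)
    qed (simp add: compose_def)
    then have "?phi (g \<otimes> h) = compose ?E (?phi g) (?phi h)" ..
    then show "?phi (g \<otimes> h) = ?phi g \<otimes>\<^bsub>BijGroup ?E\<^esub> ?phi h"
      using bij g h unfolding BijGroup_def by simp
  qed
  then show ?thesis
    unfolding group_action_def group_hom_def group_hom_axioms_def
    using is_group group_BijGroup by blast
qed

end

lemma (in group_action) fixed_point_if_prime_power_order: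
  assumes q: "Factorial_Ring.prime q" and ord: "order G = q ^ e"
    and E: "finite E" "\<not> q dvd card E"
  shows "\<exists>x\<in>E. \<forall>g\<in>carrier G. \<phi> g x = x"
proof (rule ccontr)
  assume no_fixed_point: "\<not> ?thesis"
  have "q dvd card orb" if orb: "orb \<in> orbits G E \<phi>" for orb
  proof -
    obtain x where x: "x \<in> E" "orb = orbit G \<phi> x"
      using orb unfolding orbits_def by blast
    have "card (orbit G \<phi> x) dvd q ^ e"
      using orbit_stabilizer_theorem[OF x(1)] ord by (metis dvd_triv_left)
    then obtain i where i: "card (orbit G \<phi> x) = q ^ i"
      using divides_primepow_nat[OF q] by blast
    obtain g where g: "g \<in> carrier G" "\<phi> g x \<noteq> x"
      using no_fixed_point x(1) by blast
    have "{x, \<phi> g x} \<subseteq> orbit G \<phi> x"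
      using g(1) orbit_refl[OF x(1)] unfolding orbit_def by blast
    moreover have "finite (orbit G \<phi> x)"
      using E(1) x(1) element_image unfolding orbit_def by (auto intro: finite_subset)
    ultimately have "card {x, \<phi> g x} \<le> card (orbit G \<phi> x)"
      by (simp add: card_mono)
    then have "2 \<le> card (orbit G \<phi> x)"
      using g(2) by simp
    then have "i \<noteq> 0"
      using i by (cases "i = 0") simp_all
    then show ?thesis
      using i x(2) by simp
  qed
  then have "q dvd (\<Sum>orb\<in>orbits G E \<phi>. card orb)"
    by (simp add: dvd_sum)
  moreover have "(\<Sum>orb\<in>orbits G E \<phi>. \<Sum>x\<in>orb. (1::nat)) = (\<Sum>x\<in>E. 1)"
    using disjoint_sum[OF E(1)] .
  then have "(\<Sum>orb\<in>orbits G E \<phi>. card orb) = card E"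
    by simp
  ultimately show False
    using E(2) by simp
qed

context group
begin

lemma exists_sylow_subgroup:
  assumes "finite (carrier G)" "Factorial_Ring.prime q"
  obtains P m where "subgroup P G" "card P = q ^ multiplicity q (order G)"
    "order G = q ^ multiplicity q (order G) * m" "\<not> q dvd m"
proof -
  obtain m where m: "order G = q ^ multiplicity q (order G) * m" "\<not> q dvd m"
    using multiplicity_decompose'[of "order G" q] assms order_gt_0_iff_finite
    by (metis not_prime_unit not_gr0)
  then show ?thesis
    using sylow_thm[OF assms(2) is_group m(1) assms(1)] that by blast
qed

lemma sylow_conj_image_subset:
  assumes fin: "finite (carrier G)" and q: "Factorial_Ring.prime q"
    and P: "subgroup P G" "card P = q ^ e" and m: "order G = q ^ e * m" "\<not> q dvd m"
    and K: "subgroup K G" "card K = q ^ f"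
  obtains x where "x \<in> carrier G" "(\<lambda>y. x \<otimes> y \<otimes> inv x) ` K \<subseteq> P"
proof -
  let ?E = "rcosets P"
  have "card ?E * q ^ e = q ^ e * m"
    using lagrange[OF P(1)] P(2) m(1) by simp
  then have "card ?E = m"
    using q by (simp add: prime_gt_0_nat)
  then have "\<not> q dvd card ?E"
    using m(2) by simp
  moreover have "finite ?E"
    using fin unfolding RCOSETS_def by blast
  moreover have "order (G\<lparr>carrier := K\<rparr>) = q ^ f"
    using K(2) unfolding order_def by simp
  ultimately obtain C where C: "C \<in> ?E"
    and fixed_point: "\<forall>y\<in>carrier (G\<lparr>carrier := K\<rparr>). (\<lambda>C \<in> ?E. C #> inv y) C = C"
    using group_action.fixed_point_if_prime_power_order
        [OF group_action.induced_action[OF rcosets_action[OF P(1)] K(1)] q]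
    by blast
  then have fixed: "C #> inv y = C" if "y \<in> K" for y
    using that by simp
  obtain x where x: "x \<in> carrier G" "C = P #> x"
    using C unfolding RCOSETS_def by blast
  have "x \<otimes> y \<otimes> inv x \<in> P" if "y \<in> K" for y
  proof -
    have y: "y \<in> carrier G" "inv y \<in> K"
      using subgroup.mem_carrier[OF K(1) that] subgroup.m_inv_closed[OF K(1) that] by simp_all
    have "P #> (x \<otimes> y) = C #> inv (inv y)"
      using coset_mult_assoc[OF subgroup.subset[OF P(1)] x(1) y(1)] x(2) y(1) by simp
    then have "P #> (x \<otimes> y) = P #> x"
      using fixed[OF y(2)] x(2) by simp
    then have "x \<otimes> y \<in> P #> x"
      using rcos_self[OF m_closed[OF x(1) y(1)] P(1)] by simp
    then show ?thesis
      using subgroup.rcos_module_imp[OF P(1) is_group x(1)] by blast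
  qed
  then show ?thesis
    using that x(1) by blast
qed

lemma frattini_argument:
  assumes fin: "finite (carrier G)" and M: "M \<lhd> G" and q: "Factorial_Ring.prime q"
    and Q: "subgroup Q (G\<lparr>carrier := M\<rparr>)" "card Q = q ^ e"
    and m: "card M = q ^ e * m" "\<not> q dvd m" and g: "g \<in> carrier G"
  obtains y where "y \<in> M" "y \<otimes> g \<in> normalizer G Q"
proof -
  have M_subgroup: "subgroup M G"
    using normal_imp_subgroup[OF M] .
  have M_sub: "M \<subseteq> carrier G"
    using subgroup.subset[OF M_subgroup] .
  interpret M: group "G\<lparr>carrier := M\<rparr>"
    using subgroup.subgroup_is_group[OF M_subgroup is_group] .
  have Q_subgroup: "subgroup Q G"
    using incl_subgroup[OF M_subgroup Q(1)] .
  have Q_sub: "Q \<subseteq> M" "Q \<subseteq> carrier G"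
    using subgroup.subset[OF Q(1)] M_sub by auto
  define Q' where "Q' = (\<lambda>x. g \<otimes> x \<otimes> inv g) ` Q"
  have "Q' \<subseteq> M"
    unfolding Q'_def using Q_sub normal_invE(2)[OF M g] by blast
  then have "subgroup Q' (G\<lparr>carrier := M\<rparr>)"
    unfolding Q'_def using subgroup_incl[OF subgroup_conj_image[OF Q_subgroup g] M_subgroup] by simp
  moreover have "card Q' = q ^ e"
    unfolding Q'_def using card_conj_image[OF g Q_sub(2)] Q(2) by simp
  moreover have "finite (carrier (G\<lparr>carrier := M\<rparr>))" "order (G\<lparr>carrier := M\<rparr>) = q ^ e * m"
    using finite_subset[OF M_sub fin] m(1) unfolding order_def by simp_all
  ultimately obtain y where "y \<in> carrier (G\<lparr>carrier := M\<rparr>)"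
    and "(\<lambda>x. y \<otimes>\<^bsub>G\<lparr>carrier := M\<rparr>\<^esub> x \<otimes>\<^bsub>G\<lparr>carrier := M\<rparr>\<^esub> inv\<^bsub>G\<lparr>carrier := M\<rparr>\<^esub> y) ` Q' \<subseteq> Q"
    using M.sylow_conj_image_subset[OF _ q Q _ m(2)] by metis
  then have y: "y \<in> M" and y_conj: "(\<lambda>x. y \<otimes> x \<otimes> inv y) ` Q' \<subseteq> Q"
    using m_inv_consistent[OF M_subgroup] by simp_all
  have y_carrier: "y \<in> carrier G"
    using y M_sub by blast
  have "(\<lambda>x. (y \<otimes> g) \<otimes> x \<otimes> inv (y \<otimes> g)) ` Q \<subseteq> Q"
  proof
    fix z assume "z \<in> (\<lambda>x. (y \<otimes> g) \<otimes> x \<otimes> inv (y \<otimes> g)) ` Q"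
    then obtain x where x: "x \<in> Q" "z = (y \<otimes> g) \<otimes> x \<otimes> inv (y \<otimes> g)"
      by blast
    then have "z = y \<otimes> (g \<otimes> x \<otimes> inv g) \<otimes> inv y"
      using Q_sub(2) y_carrier g by (simp add: subsetD m_assoc inv_mult_group)
    then show "z \<in> Q"
      using y_conj x(1) unfolding Q'_def by blast
  qed
  then show ?thesis
    using that y mem_normalizer_if_conj_image_subset[OF fin Q_sub(2)] y_carrier g by simp
qed

section \<open>Solvable groups\<close>

lemma derived_series_normal:
  "(derived G ^^ n) (carrier G) \<lhd> G"
  by (induction n) (simp_all add: normal_self derived_is_normal)

lemma exists_abelian_normal_subgroup:
  assumes "solvable G" "carrier G \<noteq> {\<one>}"
  obtains V where "V \<lhd> G" "V \<noteq> {\<one>}" "\<And>a b. a \<in> V \<Longrightarrow> b \<in> V \<Longrightarrow> a \<otimes> b = b \<otimes> a"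
proof -
  define D where "D n = (derived G ^^ n) (carrier G)" for n
  have "\<exists>n. D n = {\<one>}"
    using assms(1) solvable_iff_trivial_derived_seq unfolding D_def by blast
  define N where "N = (LEAST n. D n = {\<one>})"
  have DN: "D N = {\<one>}"
    unfolding N_def using \<open>\<exists>n. D n = {\<one>}\<close> by (rule LeastI_ex)
  have "N \<noteq> 0"
  proof
    assume "N = 0"
    then show False
      using DN assms(2) unfolding D_def by simp
  qed
  define V where "V = D (N - 1)"
  have "N - 1 < N"
    using \<open>N \<noteq> 0\<close> by simp
  then have "V \<noteq> {\<one>}"
    unfolding V_def N_def by (rule not_less_Least)
  have "D N = derived G V"
    using \<open>N \<noteq> 0\<close> unfolding V_def D_def by (metis Suc_pred' funpow.simps(2) gr0I o_apply)
  then have derived_V: "derived G V = {\<one>}"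
    using DN by simp
  have "a \<otimes> b = b \<otimes> a" if ab: "a \<in> V" "b \<in> V" for a b
  proof -
    have a: "a \<in> carrier G" and b: "b \<in> carrier G"
      using ab exp_of_derived_in_carrier[of "carrier G" "N - 1"] unfolding V_def D_def by auto
    have "a \<otimes> b \<otimes> inv a \<otimes> inv b \<in> derived G V"
      using ab unfolding derived_def by (blast intro: generate.incl)
    then have "a \<otimes> b \<otimes> inv a \<otimes> inv b = \<one>"
      using derived_V by simp
    moreover have "a \<otimes> b = (a \<otimes> b \<otimes> inv a \<otimes> inv b) \<otimes> (b \<otimes> a)"
      using a b by (simp add: m_assoc)
    ultimately show ?thesis
      using a b by simp
  qed
  moreover have "V \<lhd> G"
    unfolding V_def D_def by (rule derived_series_normal)
  ultimately show ?thesis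
    using that \<open>V \<noteq> {\<one>}\<close> by blast
qed

section \<open>Norms in an abelian normal subgroup\<close>

definition conj_norm :: "'a set \<Rightarrow> 'a set \<Rightarrow> 'a \<Rightarrow> 'a"
  where "conj_norm V S v = finprod (G\<lparr>carrier := V\<rparr>) (\<lambda>k. k \<otimes> v \<otimes> inv k) S"

context
  fixes V :: "'a set"
  assumes V_normal: "V \<lhd> G"
    and V_comm: "\<And>a b. a \<in> V \<Longrightarrow> b \<in> V \<Longrightarrow> a \<otimes> b = b \<otimes> a"
begin

lemma comm_group_abelian_normal: "comm_group (G\<lparr>carrier := V\<rparr>)"
proof -
  interpret V: group "G\<lparr>carrier := V\<rparr>"
    using subgroup.subgroup_is_group[OF normal_imp_subgroup[OF V_normal] is_group] .
  show ?thesis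
    by (rule V.group_comm_groupI) (use V_comm in simp)
qed

lemma conj_finprod:
  assumes a: "a \<in> carrier G" and S: "finite S" and f: "f \<in> S \<rightarrow> V"
  shows "a \<otimes> finprod (G\<lparr>carrier := V\<rparr>) f S \<otimes> inv a
    = finprod (G\<lparr>carrier := V\<rparr>) (\<lambda>k. a \<otimes> f k \<otimes> inv a) S"
proof -
  interpret V: comm_group "G\<lparr>carrier := V\<rparr>"
    by (rule comm_group_abelian_normal)
  have V_sub: "V \<subseteq> carrier G"
    using normal_imp_subgroup[OF V_normal] subgroup.subset by blast
  show ?thesis
    using S f
  proof (induction S rule: finite_induct)
    case empty
    then show ?case
      using a by simp
  next
    case (insert s S)
    have conj_f: "(\<lambda>k. a \<otimes> f k \<otimes> inv a) \<in> insert s S \<rightarrow> V"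
      using insert.prems normal_invE(2)[OF V_normal a] by auto
    have prod_S: "finprod (G\<lparr>carrier := V\<rparr>) f S \<in> carrier G"
      using V.finprod_closed[of f S] insert.prems V_sub by auto
    have "a \<otimes> (f s \<otimes> finprod (G\<lparr>carrier := V\<rparr>) f S) \<otimes> inv a
        = (a \<otimes> f s \<otimes> inv a) \<otimes> (a \<otimes> finprod (G\<lparr>carrier := V\<rparr>) f S \<otimes> inv a)"
      using a prod_S insert.prems V_sub by (auto simp: m_assoc)
    then show ?case
      using insert conj_f by (simp add: Pi_iff)
  qed
qed

lemma conj_norm_closed:
  assumes "S \<subseteq> carrier G" "v \<in> V"
  shows "conj_norm V S v \<in> V"
proof -
  interpret V: comm_group "G\<lparr>carrier := V\<rparr>"
    by (rule comm_group_abelian_normal)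
  have "(\<lambda>k. k \<otimes> v \<otimes> inv k) \<in> S \<rightarrow> V"
    using normal_invE(2)[OF V_normal _ assms(2)] assms(1) by blast
  then show ?thesis
    unfolding conj_norm_def using V.finprod_closed by simp
qed

lemma conj_conj_norm:
  assumes a: "a \<in> carrier G" and S: "S \<subseteq> carrier G" "finite S" and v: "v \<in> V"
  shows "a \<otimes> conj_norm V S v \<otimes> inv a = conj_norm V ((\<otimes>) a ` S) v"
proof -
  interpret V: comm_group "G\<lparr>carrier := V\<rparr>"
    by (rule comm_group_abelian_normal)
  have conj_v: "k \<otimes> v \<otimes> inv k \<in> V" if "k \<in> carrier G" for k
    using normal_invE(2)[OF V_normal that v] .
  have v_carrier: "v \<in> carrier G"
    using subgroup.mem_carrier[OF normal_imp_subgroup[OF V_normal] v] .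
  have "a \<otimes> conj_norm V S v \<otimes> inv a
      = finprod (G\<lparr>carrier := V\<rparr>) (\<lambda>k. a \<otimes> (k \<otimes> v \<otimes> inv k) \<otimes> inv a) S"
    unfolding conj_norm_def using conj_v S(1) by (intro conj_finprod[OF a S(2)]) blast
  also have "\<dots> = finprod (G\<lparr>carrier := V\<rparr>) (\<lambda>k. (a \<otimes> k) \<otimes> v \<otimes> inv (a \<otimes> k)) S"
  proof (rule V.finprod_cong')
    show "(\<lambda>k. (a \<otimes> k) \<otimes> v \<otimes> inv (a \<otimes> k)) \<in> S \<rightarrow> carrier (G\<lparr>carrier := V\<rparr>)"
      using conj_v a S(1) by auto
    show "a \<otimes> (k \<otimes> v \<otimes> inv k) \<otimes> inv a = (a \<otimes> k) \<otimes> v \<otimes> inv (a \<otimes> k)" if "k \<in> S" for k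
      using a v_carrier subsetD[OF S(1) that] by (simp add: m_assoc inv_mult_group)
  qed simp
  also have "\<dots> = conj_norm V ((\<otimes>) a ` S) v"
  proof -
    have "(\<lambda>k. k \<otimes> v \<otimes> inv k) \<in> (\<otimes>) a ` S \<rightarrow> V"
      using conj_v a S(1) by auto
    then show ?thesis
      unfolding conj_norm_def
      by (simp add: V.finprod_reindex[OF _ inj_on_subset[OF inj_on_cmult[OF a] S(1)]])
  qed
  finally show ?thesis .
qed

lemma conj_norm_diff_one:
  assumes S: "\<one> \<in> S" "S \<subseteq> carrier G" "finite S" and v: "v \<in> V"
  shows "conj_norm V (S - {\<one>}) v = inv v \<otimes> conj_norm V S v"
proof -
  interpret V: comm_group "G\<lparr>carrier := V\<rparr>"
    by (rule comm_group_abelian_normal)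
  have v_carrier: "v \<in> carrier G"
    using subgroup.mem_carrier[OF normal_imp_subgroup[OF V_normal] v] .
  have conj_v: "(\<lambda>k. k \<otimes> v \<otimes> inv k) \<in> S \<rightarrow> V"
    using normal_invE(2)[OF V_normal _ v] S(2) by blast
  have "S = insert \<one> (S - {\<one>})"
    using S(1) by blast
  moreover have "finprod (G\<lparr>carrier := V\<rparr>) (\<lambda>k. k \<otimes> v \<otimes> inv k) (insert \<one> (S - {\<one>}))
      = (\<one> \<otimes> v \<otimes> inv \<one>) \<otimes>\<^bsub>G\<lparr>carrier := V\<rparr>\<^esub>
        finprod (G\<lparr>carrier := V\<rparr>) (\<lambda>k. k \<otimes> v \<otimes> inv k) (S - {\<one>})"
    by (rule V.finprod_insert) (use S(3) conj_v v v_carrier in auto)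
  ultimately have "conj_norm V S v = v \<otimes> conj_norm V (S - {\<one>}) v"
    unfolding conj_norm_def using v_carrier by simp
  moreover have "conj_norm V (S - {\<one>}) v \<in> carrier G"
    using subgroup.mem_carrier[OF normal_imp_subgroup[OF V_normal] conj_norm_closed[of "S - {\<one>}" v]] S(2) v
    by blast
  ultimately show ?thesis
    using v_carrier by simp
qed

end

end

section \<open>Groups whose elements have prime power order\<close>

locale eppo_group = group +
  assumes finite_carrier: "finite (carrier G)"
    and ord_prime_divisor_unique:
      "\<lbrakk>x \<in> carrier G; Factorial_Ring.prime p; Factorial_Ring.prime q; p dvd ord x; q dvd ord x\<rbrakk>
        \<Longrightarrow> p = q"
begin

lemma p_element_if_prime_dvd_ord:
  assumes "x \<in> carrier G" "Factorial_Ring.prime p" "p dvd ord x"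
  shows "p_element p x"
proof -
  have "ord x > 0"
    using ord_ge_1[OF finite_carrier assms(1)] by simp
  then have "\<exists>k. ord x = p ^ k"
    using ord_prime_divisor_unique[OF assms(1) _ assms(2) _ assms(3)]
    by (intro prime_power_if_unique_prime_divisor) blast+
  then show ?thesis
    using assms(1) unfolding p_element_def by blast
qed

lemma commuting_coprime_ord:
  assumes x: "x \<in> carrier G" and y: "y \<in> carrier G"
    and comm: "x \<otimes> y = y \<otimes> x" and cop: "coprime (ord x) (ord y)"
  shows "x = \<one> \<or> y = \<one>"
proof (rule ccontr)
  assume "\<not> ?thesis"
  then have "ord x \<noteq> 1" "ord y \<noteq> 1"
    using ord_eq_1 x y by auto
  then obtain p q where p: "Factorial_Ring.prime p" "p dvd ord x"
    and q: "Factorial_Ring.prime q" "q dvd ord y"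
    using prime_factor_nat by blast
  then have "p dvd ord (x \<otimes> y)" "q dvd ord (x \<otimes> y)"
    using ord_mult_coprime[OF x y comm cop] by simp_all
  then have "p = q"
    using ord_prime_divisor_unique[OF m_closed[OF x y] p(1) q(1)] by blast
  then show False
    using p q cop coprime_common_divisor not_prime_unit by blast
qed

lemma commuting_p_elements:
  assumes "Factorial_Ring.prime p" "Factorial_Ring.prime q" "p \<noteq> q"
    and "p_element p x" "p_element q y" "x \<otimes> y = y \<otimes> x"
  shows "x = \<one> \<or> y = \<one>"
  using assms commuting_coprime_ord coprime_ord_p_elements unfolding p_element_def by blast

lemma abelian_subgroup_p_elements:
  assumes V: "V \<subseteq> carrier G" "\<And>a b. a \<in> V \<Longrightarrow> b \<in> V \<Longrightarrow> a \<otimes> b = b \<otimes> a"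
    and v: "v \<in> V" "Factorial_Ring.prime p" "p dvd ord v" and w: "w \<in> V"
  shows "p_element p w"
proof (cases "w = \<one>")
  case True
  then show ?thesis
    unfolding p_element_def by (metis one_closed ord_id power_0)
next
  case False
  then obtain t where t: "Factorial_Ring.prime t" "t dvd ord w"
    using prime_factor_nat ord_eq_1 w V(1) by blast
  have "v \<noteq> \<one>"
    using v(2,3) by auto
  have "w \<in> carrier G" "v \<in> carrier G"
    using v(1) w V(1) by auto
  have "t = p"
  proof (rule ccontr)
    assume "t \<noteq> p"
    then have "w = \<one> \<or> v = \<one>"
      using commuting_p_elements[OF t(1) v(2) _ p_element_if_prime_dvd_ord[OF \<open>w \<in> carrier G\<close> t]
          p_element_if_prime_dvd_ord[OF \<open>v \<in> carrier G\<close> v(2,3)] V(2)[OF w v(1)]]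
      by blast
    then show False
      using False \<open>v \<noteq> \<one>\<close> by blast
  qed
  then show ?thesis
    using p_element_if_prime_dvd_ord t w V(1) by blast
qed

lemma prime_divisors_derived_index_eq:
  assumes H: "subgroup H G"
    and s: "Factorial_Ring.prime s" "s dvd card H" "\<not> s dvd card (derived G H)"
    and t: "Factorial_Ring.prime t" "t dvd card H" "\<not> t dvd card (derived G H)"
  shows "s = t"
proof (rule ccontr)
  assume "s \<noteq> t"
  define W where "W = derived G H"
  define A where "A = G\<lparr>carrier := H\<rparr> Mod W"
  interpret H: group "G\<lparr>carrier := H\<rparr>"
    using subgroup.subgroup_is_group[OF H is_group] .
  interpret W: normal W "G\<lparr>carrier := H\<rparr>"
    using derived_subgroup_is_normal[OF H] unfolding W_def .
  interpret A: comm_group A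
    using derived_quot_of_subgroup_is_comm_group[OF H] unfolding A_def W_def .
  have H_sub: "H \<subseteq> carrier G"
    using subgroup.subset[OF H] .
  have "finite H"
    using H_sub finite_carrier finite_subset by blast
  then have fin_A: "finite (carrier A)"
    unfolding A_def FactGroup_def RCOSETS_def by simp
  have "order A * card W = card H"
    using H.lagrange[OF W.subgroup_axioms] unfolding A_def FactGroup_def order_def by simp
  then have "s dvd order A" "t dvd order A"
    using s t unfolding W_def by (metis prime_dvd_mult_iff)+
  then obtain a b where a: "a \<in> carrier A" "A.ord a = s" and b: "b \<in> carrier A" "A.ord b = t"
    using A.exists_ord_eq_prime[OF fin_A] s(1) t(1) by metis
  \<comment> \<open>an element of order \<open>s * t\<close> in the abelian quotient lifts to one whose order is divisible by both\<close>
  have "A.ord (a \<otimes>\<^bsub>A\<^esub> b) = s * t"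
    using A.ord_mult_coprime[OF a(1) b(1) A.m_comm[OF a(1) b(1)]] a b primes_coprime[OF s(1) t(1) \<open>s \<noteq> t\<close>]
    by simp
  moreover obtain x where x: "x \<in> H" "a \<otimes>\<^bsub>A\<^esub> b = W #>\<^bsub>G\<lparr>carrier := H\<rparr>\<^esub> x"
    using A.m_closed[OF a(1) b(1)] unfolding A_def FactGroup_def RCOSETS_def by auto
  moreover have "A.ord (W #>\<^bsub>G\<lparr>carrier := H\<rparr>\<^esub> x) dvd ord x"
    using W.ord_FactGroup_dvd[of x] x(1) ord_subgroup_eq[OF H x(1)] unfolding A_def by simp
  ultimately have "s * t dvd ord x"
    by simp
  then have "s dvd ord x" "t dvd ord x"
    using dvd_mult_left dvd_mult_right by blast+
  then show False
    using ord_prime_divisor_unique[OF subsetD[OF H_sub x(1)] s(1) t(1)] \<open>s \<noteq> t\<close> by blast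
qed

lemma exists_normalizing_p_subgroups:
  assumes M: "M \<lhd> G" and q: "Factorial_Ring.prime q" "q dvd card M"
    and r: "Factorial_Ring.prime r" "\<not> r dvd card M" "r dvd order G"
  obtains Q H e f where "subgroup Q G" "card Q = q ^ e" "e > 0"
    "subgroup H G" "card H = r ^ f" "f > 0" "H \<subseteq> normalizer G Q"
proof -
  have M_subgroup: "subgroup M G"
    using normal_imp_subgroup[OF M] .
  have "finite M"
    using finite_subset[OF subgroup.subset[OF M_subgroup] finite_carrier] .
  interpret M: group "G\<lparr>carrier := M\<rparr>"
    using subgroup.subgroup_is_group[OF M_subgroup is_group] .
  define e where "e = multiplicity q (card M)"
  obtain Q m where Q: "subgroup Q (G\<lparr>carrier := M\<rparr>)" "card Q = q ^ e"
    and m: "card M = q ^ e * m" "\<not> q dvd m"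
    using M.exists_sylow_subgroup[of q] \<open>finite M\<close> q(1) unfolding e_def order_def by auto
  have "card M \<noteq> 0"
    using \<open>finite M\<close> subgroup.one_closed[OF M_subgroup] by auto
  then have "e > 0"
    unfolding e_def using q multiplicity_gt_zero_iff not_prime_unit by blast
  have Q_subgroup: "subgroup Q G"
    using incl_subgroup[OF M_subgroup Q(1)] .
  obtain g where g: "g \<in> carrier G" "ord g = r"
    using exists_ord_eq_prime[OF finite_carrier r(1,3)] .
  obtain y where y: "y \<in> M" "y \<otimes> g \<in> normalizer G Q"
    using frattini_argument[OF finite_carrier M q(1) Q m g(1)] .
  define n where "n = y \<otimes> g"
  have n_carrier: "n \<in> carrier G"
    unfolding n_def using subgroup.mem_carrier[OF M_subgroup y(1)] g(1) by simp
  have "r dvd ord n"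
    unfolding n_def using prime_dvd_ord_mult_normal[OF M \<open>finite M\<close> y(1) g r(1,2)] .
  then obtain f where n: "ord n = r ^ f" "f > 0"
    using p_element_if_prime_dvd_ord[OF n_carrier r(1)] r(1) unfolding p_element_def
    by (metis gr0I not_prime_1 nat_dvd_1_iff_1 power_0)
  show ?thesis
  proof (rule that[of Q e "generate G {n}" f])
    show "subgroup (generate G {n}) G"
      using generate_is_subgroup n_carrier by simp
    show "card (generate G {n}) = r ^ f"
      using generate_pow_card[OF n_carrier] n(1) by simp
    show "generate G {n} \<subseteq> normalizer G Q"
      using generate_subgroup_incl normalizer_imp_subgroup subgroup.subset[OF Q_subgroup] y(2)
      unfolding n_def by simp
  qed (use Q_subgroup Q(2) \<open>e > 0\<close> n(2) in simp_all)
qed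

lemma exists_separating_normal_subgroup:
  assumes "solvable G"
    and q: "Factorial_Ring.prime q" "q dvd order G" and r: "Factorial_Ring.prime r" "r dvd order G"
    and "q \<noteq> r"
  obtains M where "M \<lhd> G" "q dvd card M" "\<not> r dvd card M"
    | M where "M \<lhd> G" "r dvd card M" "\<not> q dvd card M"
proof -
  define D where "D n = (derived G ^^ n) (carrier G)" for n
  obtain N where "D N = {\<one>}"
    using assms(1) solvable_iff_trivial_derived_seq unfolding D_def by blast
  then have N: "\<not> q dvd card (D N)" "\<not> r dvd card (D N)"
    using q(1) r(1) by auto
  define i where "i s = (LEAST n. \<not> s dvd card (D n))" for s
  have i_spec: "\<not> s dvd card (D (i s))" "\<And>n. n < i s \<Longrightarrow> s dvd card (D n)"
    if "\<not> s dvd card (D N)" for s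
    unfolding i_def using LeastI[of "\<lambda>n. \<not> s dvd card (D n)", OF that] not_less_Least by blast+
  have "i q \<noteq> i r"
  proof
    assume eq: "i q = i r"
    have "i q \<noteq> 0"
      using i_spec(1)[OF N(1)] q(2) unfolding D_def order_def by (metis funpow_0)
    then obtain k where k: "i q = Suc k"
      using not0_implies_Suc by blast
    have "q dvd card (D k)" "r dvd card (D k)"
      using i_spec(2)[OF N(1)] i_spec(2)[OF N(2)] eq k by auto
    moreover have "D (i q) = derived G (D k)"
      using k unfolding D_def by simp
    then have "\<not> q dvd card (derived G (D k))" "\<not> r dvd card (derived G (D k))"
      using i_spec(1)[OF N(1)] i_spec(1)[OF N(2)] eq by simp_all
    ultimately show False
      using prime_divisors_derived_index_eq[OF normal_imp_subgroup[OF derived_series_normal[of k]]]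
        q(1) r(1) \<open>q \<noteq> r\<close> unfolding D_def by blast
  qed
  then consider "i r < i q" | "i q < i r"
    by linarith
  then show ?thesis
  proof cases
    case 1
    then show ?thesis
      using that(1)[OF derived_series_normal] i_spec[OF N(1)] i_spec[OF N(2)] unfolding D_def by blast
  next
    case 2
    then show ?thesis
      using that(2)[OF derived_series_normal] i_spec[OF N(1)] i_spec[OF N(2)] unfolding D_def by blast
  qed
qed

lemma conj_norm_eq_one:
  assumes V: "V \<lhd> G" "\<And>a b. a \<in> V \<Longrightarrow> b \<in> V \<Longrightarrow> a \<otimes> b = b \<otimes> a"
      "\<And>w. w \<in> V \<Longrightarrow> p_element p w"
    and pq: "Factorial_Ring.prime p" "Factorial_Ring.prime q" "p \<noteq> q"
    and a: "p_element q a" "a \<noteq> \<one>"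
    and S: "S \<subseteq> carrier G" "\<And>s. s \<in> S \<Longrightarrow> a \<otimes> s \<in> S" and v: "v \<in> V"
  shows "conj_norm V S v = \<one>"
proof -
  have a_carrier: "a \<in> carrier G"
    using a(1) unfolding p_element_def by blast
  have "finite S"
    using S(1) finite_carrier finite_subset by blast
  have "(\<otimes>) a ` S = S"
    using S \<open>finite S\<close> inj_on_subset[OF inj_on_cmult[OF a_carrier] S(1)]
    by (intro endo_inj_surj) auto
  then have "a \<otimes> conj_norm V S v \<otimes> inv a = conj_norm V S v"
    using conj_conj_norm[OF V(1,2) a_carrier S(1) \<open>finite S\<close> v] by simp
  moreover have norm_V: "conj_norm V S v \<in> V"
    using conj_norm_closed[OF V(1,2) S(1) v] .
  moreover have "conj_norm V S v \<in> carrier G"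
    using subgroup.mem_carrier[OF normal_imp_subgroup[OF V(1)] norm_V] .
  ultimately have "a \<otimes> conj_norm V S v = conj_norm V S v \<otimes> a"
    using a_carrier inv_solve_right'[of "conj_norm V S v" "a \<otimes> conj_norm V S v" a] by simp
  then show ?thesis
    using commuting_p_elements[OF pq(2,1) _ a(1) V(3)[OF norm_V]] pq(3) a(2) by auto
qed

lemma conj_norm_subgroup_eq_one:
  assumes V: "V \<lhd> G" "\<And>a b. a \<in> V \<Longrightarrow> b \<in> V \<Longrightarrow> a \<otimes> b = b \<otimes> a"
      "\<And>w. w \<in> V \<Longrightarrow> p_element p w"
    and pq: "Factorial_Ring.prime p" "Factorial_Ring.prime q" "p \<noteq> q"
    and S: "subgroup S G" "a \<in> S" "p_element q a" "a \<noteq> \<one>" and v: "v \<in> V"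
  shows "conj_norm V S v = \<one>"
  using conj_norm_eq_one[OF V pq S(3,4) subgroup.subset[OF S(1)] _ v] S(1,2)
  by (simp add: subgroup.m_closed)

lemma conj_norm_conj_diff_one:
  assumes V: "V \<lhd> G" "\<And>a b. a \<in> V \<Longrightarrow> b \<in> V \<Longrightarrow> a \<otimes> b = b \<otimes> a"
      "\<And>w. w \<in> V \<Longrightarrow> p_element p w"
    and pr: "Factorial_Ring.prime p" "Factorial_Ring.prime r" "p \<noteq> r"
    and H: "subgroup H G" "card H = r ^ f" "f > 0" and x: "x \<in> carrier G" and v: "v \<in> V"
  shows "conj_norm V ((\<lambda>y. x \<otimes> y \<otimes> inv x) ` H - {\<one>}) v = inv v"
proof -
  obtain h where h: "h \<in> H" "h \<noteq> \<one>"
    using p_subgroup_nontrivial_elem[OF pr(2) H] .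
  have h_carrier: "h \<in> carrier G"
    using subgroup.mem_carrier[OF H(1) h(1)] .
  let ?H = "(\<lambda>y. x \<otimes> y \<otimes> inv x) ` H"
  have sub: "subgroup ?H G"
    using subgroup_conj_image[OF H(1) x] .
  have "x \<otimes> h \<otimes> inv x \<noteq> \<one>"
    using h(2) x h_carrier by (metis ord_conj ord_eq_1 m_closed inv_closed)
  then have "conj_norm V ?H v = \<one>"
    using conj_norm_subgroup_eq_one[OF V pr sub _ p_element_conj[OF x p_element_if_mem_p_subgroup[OF pr(2) H(1,2) h(1)]] _ v]
      h(1) by blast
  moreover have "finite ?H"
    using finite_subset[OF subgroup.subset[OF sub] finite_carrier] .
  ultimately show ?thesis
    using conj_norm_diff_one[OF V(1,2) subgroup.one_closed[OF sub] subgroup.subset[OF sub] _ v]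
      subgroup.mem_carrier[OF normal_imp_subgroup[OF V(1)] v] by simp
qed

context
  fixes Q H :: "'a set" and q r e f :: nat
  assumes q: "Factorial_Ring.prime q" and r: "Factorial_Ring.prime r" and q_neq_r: "q \<noteq> r"
    and Q: "subgroup Q G" "card Q = q ^ e"
    and H: "subgroup H G" "card H = r ^ f"
    and H_normalizes_Q: "H \<subseteq> normalizer G Q"
begin

private lemma Q_sub: "Q \<subseteq> carrier G"
  using subgroup.subset[OF Q(1)] .

private lemma H_sub: "H \<subseteq> carrier G"
  using subgroup.subset[OF H(1)] .

private lemma conj_mem_Q: "y \<in> H \<Longrightarrow> x \<in> Q \<Longrightarrow> y \<otimes> x \<otimes> inv y \<in> Q"
  using H_normalizes_Q mem_normalizer_iff[OF Q_sub] by blast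

private lemma Q_inter_H: "x \<in> Q \<Longrightarrow> x \<in> H \<Longrightarrow> x = \<one>"
  using p_element_eq_one[OF q r q_neq_r] p_element_if_mem_p_subgroup[OF q Q]
    p_element_if_mem_p_subgroup[OF r H] by blast

lemma Q_disjoint_conj_H:
  assumes x: "x \<in> Q"
  shows "Q \<inter> ((\<lambda>y. x \<otimes> y \<otimes> inv x) ` H - {\<one>}) = {}"
proof -
  have "w = \<one>" if w: "w \<in> Q" "y \<in> H" "w = x \<otimes> y \<otimes> inv x" for w y
  proof -
    have x_carrier: "x \<in> carrier G" and y_carrier: "y \<in> carrier G"
      using x w(2) Q_sub H_sub by auto
    then have "y = inv x \<otimes> w \<otimes> x"
      using w(3) by (simp add: m_assoc)
    moreover have "inv x \<otimes> w \<otimes> x \<in> Q"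
      using x w(1) Q(1) by (simp add: subgroup.m_closed subgroup.m_inv_closed)
    ultimately have "y = \<one>"
      using Q_inter_H w(2) by simp
    then show ?thesis
      using w(3) x_carrier by simp
  qed
  then show ?thesis
    by blast
qed

lemma conj_H_disjoint:
  assumes x: "x \<in> Q" "x' \<in> Q" "x \<noteq> x'"
  shows "((\<lambda>y. x \<otimes> y \<otimes> inv x) ` H - {\<one>}) \<inter> ((\<lambda>y. x' \<otimes> y \<otimes> inv x') ` H - {\<one>}) = {}"
proof -
  have False if y: "y \<in> H" "y' \<in> H" "x \<otimes> y \<otimes> inv x = x' \<otimes> y' \<otimes> inv x'" "x \<otimes> y \<otimes> inv x \<noteq> \<one>"
    for y y'
  proof -
    have carrier: "x \<in> carrier G" "x' \<in> carrier G" "y \<in> carrier G" "y' \<in> carrier G"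
      using x y Q_sub H_sub by auto
    define z where "z = inv x' \<otimes> x"
    have z: "z \<in> Q" "z \<in> carrier G"
      unfolding z_def using x Q(1) carrier by (simp_all add: subgroup.m_closed subgroup.m_inv_closed)
    have "z \<otimes> y \<otimes> inv z = inv x' \<otimes> (x \<otimes> y \<otimes> inv x) \<otimes> x'"
      unfolding z_def using carrier by (simp add: m_assoc inv_mult_group)
    then have conj_y: "z \<otimes> y \<otimes> inv z = y'"
      using y(3) carrier by (simp add: m_assoc)
    \<comment> \<open>\<open>y' \<otimes> inv y\<close> is a commutator of \<open>z \<in> Q\<close> with \<open>y \<in> H\<close>, so it lies in \<open>Q \<inter> H\<close>\<close>
    have "y' \<otimes> inv y = z \<otimes> (y \<otimes> inv z \<otimes> inv y)"
      using conj_y[symmetric] carrier z(2) by (simp add: m_assoc)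
    moreover have "y \<otimes> inv z \<otimes> inv y \<in> Q"
      using conj_mem_Q[OF y(1)] z(1) Q(1) by (simp add: subgroup.m_inv_closed)
    ultimately have "y' \<otimes> inv y \<in> Q"
      using z(1) Q(1) by (simp add: subgroup.m_closed)
    moreover have "y' \<otimes> inv y \<in> H"
      using y(1,2) H(1) by (simp add: subgroup.m_closed subgroup.m_inv_closed)
    ultimately have "y' \<otimes> inv y = \<one>"
      using Q_inter_H by blast
    moreover have "y' = (y' \<otimes> inv y) \<otimes> y"
      using carrier by (simp add: m_assoc)
    ultimately have "y' = y"
      using carrier by simp
    have "z \<otimes> y = (z \<otimes> y \<otimes> inv z) \<otimes> z"
      using carrier z(2) by (simp add: m_assoc)
    then have "z \<otimes> y = y \<otimes> z"
      using conj_y \<open>y' = y\<close> by simp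
    then have "z = \<one> \<or> y = \<one>"
      using commuting_p_elements[OF q r q_neq_r p_element_if_mem_p_subgroup[OF q Q z(1)]
          p_element_if_mem_p_subgroup[OF r H y(1)]] by blast
    moreover have "y \<noteq> \<one>"
      using y(4) carrier by auto
    moreover have "x = x' \<otimes> z"
      unfolding z_def using carrier by simp
    then have "z \<noteq> \<one>"
      using x(3) carrier by auto
    ultimately show False
      by blast
  qed
  then show ?thesis
    by blast
qed

lemma union_conj_subset_set_mult:
  "Q \<union> (\<Union>x\<in>Q. (\<lambda>y. x \<otimes> y \<otimes> inv x) ` H - {\<one>}) \<subseteq> Q <#> H"
proof
  fix w assume "w \<in> Q \<union> (\<Union>x\<in>Q. (\<lambda>y. x \<otimes> y \<otimes> inv x) ` H - {\<one>})"
  then consider "w \<in> Q" | x y where "x \<in> Q" "y \<in> H" "w = x \<otimes> y \<otimes> inv x"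
    by blast
  then show "w \<in> Q <#> H"
  proof cases
    case 1
    then have "w \<in> carrier G"
      using Q_sub by blast
    then show ?thesis
      using set_mult_memI[OF 1 subgroup.one_closed[OF H(1)]] by simp
  next
    case 2
    then have carrier: "x \<in> carrier G" "y \<in> carrier G"
      using Q_sub H_sub by auto
    have "w = (x \<otimes> (y \<otimes> inv x \<otimes> inv y)) \<otimes> y"
      using 2(3) carrier by (simp add: m_assoc)
    moreover have "x \<otimes> (y \<otimes> inv x \<otimes> inv y) \<in> Q"
      using conj_mem_Q[OF 2(2)] 2(1) Q(1) by (simp add: subgroup.m_closed subgroup.m_inv_closed)
    ultimately show ?thesis
      using set_mult_memI 2(2) by simp
  qed
qed

lemma card_union_conj:
  "card (Q \<union> (\<Union>x\<in>Q. (\<lambda>y. x \<otimes> y \<otimes> inv x) ` H - {\<one>})) = card Q * card H"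
proof -
  have fin: "finite Q" "finite H"
    using finite_subset[OF Q_sub finite_carrier] finite_subset[OF H_sub finite_carrier] .
  have card_conj: "card ((\<lambda>y. x \<otimes> y \<otimes> inv x) ` H - {\<one>}) = card H - 1" if "x \<in> Q" for x
  proof -
    have "x \<in> carrier G"
      using that Q_sub by blast
    then have "\<one> \<in> (\<lambda>y. x \<otimes> y \<otimes> inv x) ` H"
      using subgroup.one_closed[OF H(1)] image_eqI[of \<one> "\<lambda>y. x \<otimes> y \<otimes> inv x" \<one>] by simp
    then show ?thesis
      using card_conj_image[OF \<open>x \<in> carrier G\<close> H_sub] fin(2) by simp
  qed
  have fin_U: "finite (\<Union>x\<in>Q. (\<lambda>y. x \<otimes> y \<otimes> inv x) ` H - {\<one>})"
    using fin by simp
  have "card (\<Union>x\<in>Q. (\<lambda>y. x \<otimes> y \<otimes> inv x) ` H - {\<one>})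
      = (\<Sum>x\<in>Q. card ((\<lambda>y. x \<otimes> y \<otimes> inv x) ` H - {\<one>}))"
    by (rule card_UN_disjoint) (use fin conj_H_disjoint in simp_all)
  also have "\<dots> = card Q * (card H - 1)"
    using card_conj by simp
  finally have "card (\<Union>x\<in>Q. (\<lambda>y. x \<otimes> y \<otimes> inv x) ` H - {\<one>}) = card Q * (card H - 1)" .
  moreover have "Q \<inter> (\<Union>x\<in>Q. (\<lambda>y. x \<otimes> y \<otimes> inv x) ` H - {\<one>}) = {}"
    using Q_disjoint_conj_H by blast
  ultimately have "card (Q \<union> (\<Union>x\<in>Q. (\<lambda>y. x \<otimes> y \<otimes> inv x) ` H - {\<one>}))
      = card Q + card Q * (card H - 1)"
    using card_Un_disjoint[OF fin(1) fin_U] by simp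
  also have "\<dots> = card Q * card H"
    using fin(2) subgroup.one_closed[OF H(1)] by (cases "card H") auto
  finally show ?thesis .
qed

lemma set_mult_eq_union_conj:
  "Q <#> H = Q \<union> (\<Union>x\<in>Q. (\<lambda>y. x \<otimes> y \<otimes> inv x) ` H - {\<one>})"
proof -
  have "finite Q" "finite H" "finite (Q <#> H)"
    using finite_subset[OF Q_sub finite_carrier] finite_subset[OF H_sub finite_carrier]
      finite_subset[OF setmult_subset_G[OF Q_sub H_sub] finite_carrier] .
  then show ?thesis
    using union_conj_subset_set_mult card_union_conj card_set_mult_le
    by (intro card_seteq[symmetric]) simp_all
qed

lemma conj_norm_set_mult:
  assumes V: "V \<lhd> G" "\<And>a b. a \<in> V \<Longrightarrow> b \<in> V \<Longrightarrow> a \<otimes> b = b \<otimes> a"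
      "\<And>w. w \<in> V \<Longrightarrow> p_element p w"
    and p: "Factorial_Ring.prime p" "p \<noteq> q" "p \<noteq> r"
    and ef: "e > 0" "f > 0" and v: "v \<in> V"
  shows "conj_norm V (Q <#> H) v = inv v [^] card Q"
proof -
  interpret V: comm_group "G\<lparr>carrier := V\<rparr>"
    using comm_group_abelian_normal[OF V(1,2)] .
  have v_carrier: "v \<in> carrier G"
    using subgroup.mem_carrier[OF normal_imp_subgroup[OF V(1)] v] .
  have fin: "finite Q" "finite H"
    using finite_subset[OF Q_sub finite_carrier] finite_subset[OF H_sub finite_carrier] .
  define A where "A x = (\<lambda>y. x \<otimes> y \<otimes> inv x) ` H - {\<one>}" for x
  have A_sub: "A x \<subseteq> carrier G" if "x \<in> Q" for x
    unfolding A_def using that Q_sub H_sub by auto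
  have fin_A: "finite (A x)" for x
    unfolding A_def using fin(2) by simp
  have conj_v: "(\<lambda>k. k \<otimes> v \<otimes> inv k) \<in> S \<rightarrow> carrier (G\<lparr>carrier := V\<rparr>)" if "S \<subseteq> carrier G" for S
    using normal_invE(2)[OF V(1) _ v] that by auto
  obtain a where a: "a \<in> Q" "a \<noteq> \<one>"
    using p_subgroup_nontrivial_elem[OF q Q ef(1)] .
  have norm_Q: "conj_norm V Q v = \<one>"
    using conj_norm_subgroup_eq_one[OF V p(1) q p(2) Q(1) a(1) p_element_if_mem_p_subgroup[OF q Q a(1)] a(2) v] .
  have norm_A: "conj_norm V (A x) v = inv v" if "x \<in> Q" for x
    unfolding A_def using conj_norm_conj_diff_one[OF V p(1) r p(3) H ef(2) _ v] that Q_sub by blast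
  have U_sub: "(\<Union>x\<in>Q. A x) \<subseteq> carrier G"
    using A_sub by blast
  have "Q <#> H = Q \<union> (\<Union>x\<in>Q. A x)"
    unfolding A_def by (rule set_mult_eq_union_conj)
  moreover have "Q \<inter> (\<Union>x\<in>Q. A x) = {}"
    using Q_disjoint_conj_H unfolding A_def by blast
  moreover have "finite (\<Union>x\<in>Q. A x)"
    using fin(1) fin_A by blast
  ultimately have "conj_norm V (Q <#> H) v = conj_norm V Q v \<otimes> conj_norm V (\<Union>x\<in>Q. A x) v"
    unfolding conj_norm_def
    using V.finprod_Un_disjoint[OF fin(1) _ _ conj_v[OF Q_sub] conj_v[OF U_sub]] by simp
  also have "conj_norm V (\<Union>x\<in>Q. A x) v = finprod (G\<lparr>carrier := V\<rparr>) (\<lambda>x. conj_norm V (A x) v) Q"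
    unfolding conj_norm_def
  proof (rule V.finprod_UN_disjoint)
    show "pairwise (\<lambda>x x'. disjnt (A x) (A x')) Q"
      unfolding pairwise_def disjnt_def A_def using conj_H_disjoint by blast
    show "k \<otimes> v \<otimes> inv k \<in> carrier (G\<lparr>carrier := V\<rparr>)" if "x \<in> Q" "k \<in> A x" for x k
      using conj_v[OF A_sub[OF that(1)]] that(2) by blast
  qed (use fin(1) fin_A in simp_all)
  also have "\<dots> = finprod (G\<lparr>carrier := V\<rparr>) (\<lambda>x. inv v) Q"
    using norm_A v normal_imp_subgroup[OF V(1)] by (intro V.finprod_cong') (simp_all add: subgroup.m_inv_closed)
  also have "\<dots> = inv v [^] card Q"
    using V.finprod_const[of "inv v" Q] v normal_imp_subgroup[OF V(1)]
    by (simp add: subgroup.m_inv_closed nat_pow_consistent[symmetric])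
  finally show ?thesis
    using norm_Q v_carrier by simp
qed

lemma abelian_normal_p_subgroup_trivial:
  assumes V: "V \<lhd> G" "\<And>a b. a \<in> V \<Longrightarrow> b \<in> V \<Longrightarrow> a \<otimes> b = b \<otimes> a"
      "\<And>w. w \<in> V \<Longrightarrow> p_element p w"
    and p: "Factorial_Ring.prime p" "p \<noteq> q" "p \<noteq> r"
    and ef: "e > 0" "f > 0" and v: "v \<in> V"
  shows "v = \<one>"
proof -
  obtain h where h: "h \<in> H" "h \<noteq> \<one>"
    using p_subgroup_nontrivial_elem[OF r H ef(2)] .
  have h_carrier: "h \<in> carrier G"
    using h(1) H_sub by blast
  have "h \<otimes> k \<in> Q <#> H" if k: "k \<in> Q <#> H" for k
  proof -
    obtain x y where xy: "x \<in> Q" "y \<in> H" "k = x \<otimes> y"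
      using k unfolding set_mult_def by blast
    then have "h \<otimes> k = (h \<otimes> x \<otimes> inv h) \<otimes> (h \<otimes> y)"
      using h_carrier Q_sub H_sub by (simp add: subsetD m_assoc)
    then show ?thesis
      using set_mult_memI[OF conj_mem_Q[OF h(1) xy(1)]] h(1) xy(2) H(1) by (simp add: subgroup.m_closed)
  qed
  then have "conj_norm V (Q <#> H) v = \<one>"
    using conj_norm_eq_one[OF V p(1) r p(3) p_element_if_mem_p_subgroup[OF r H h(1)] h(2)
        setmult_subset_G[OF Q_sub H_sub] _ v] by blast
  then have "inv v [^] card Q = \<one>"
    using conj_norm_set_mult[OF V p ef v] by simp
  moreover have v_carrier: "v \<in> carrier G"
    using subgroup.mem_carrier[OF normal_imp_subgroup[OF V(1)] v] .
  ultimately have "ord v dvd q ^ e"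
    using pow_eq_id[of "inv v"] Q(2) by simp
  then show ?thesis
    using p_element_eq_one[OF p(1) q p(2) V(3)[OF v] p_element_if_ord_dvd[OF q v_carrier]] by blast
qed

end

lemma abelian_normal_p_subgroup_trivial_if_separated:
  assumes V: "V \<lhd> G" "\<And>a b. a \<in> V \<Longrightarrow> b \<in> V \<Longrightarrow> a \<otimes> b = b \<otimes> a"
      "\<And>w. w \<in> V \<Longrightarrow> p_element p w"
    and M: "M \<lhd> G" "q dvd card M" "\<not> r dvd card M" "r dvd order G"
    and pqr: "Factorial_Ring.prime p" "Factorial_Ring.prime q" "Factorial_Ring.prime r"
      "q \<noteq> r" "p \<noteq> q" "p \<noteq> r"
    and v: "v \<in> V"
  shows "v = \<one>"
proof -
  obtain Q H e f where Q: "subgroup Q G" "card Q = q ^ e" "e > 0"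
    and H: "subgroup H G" "card H = r ^ f" "f > 0" and normalizes: "H \<subseteq> normalizer G Q"
    using exists_normalizing_p_subgroups[OF M(1) pqr(2) M(2) pqr(3) M(3,4)] .
  show ?thesis
    using abelian_normal_p_subgroup_trivial[OF pqr(2,3,4) Q(1,2) H(1,2) normalizes V pqr(1,5,6) Q(3) H(3) v] .
qed

theorem solvable_num_prime_divisors_le_2:
  assumes "solvable G"
  shows "num_prime_divisors (order G) \<le> 2"
proof (rule ccontr)
  define P where "P = {p. Factorial_Ring.prime p \<and> p dvd order G}"
  assume "\<not> ?thesis"
  then have card_P: "card P \<ge> 3"
    unfolding P_def num_prime_divisors_def by simp
  have "carrier G \<noteq> {\<one>}"
  proof
    assume "carrier G = {\<one>}"
    then have "P = {}"
      unfolding P_def order_def by auto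
    then show False
      using card_P by simp
  qed
  then obtain V where V: "V \<lhd> G" "V \<noteq> {\<one>}" "\<And>a b. a \<in> V \<Longrightarrow> b \<in> V \<Longrightarrow> a \<otimes> b = b \<otimes> a"
    using exists_abelian_normal_subgroup[OF assms] by blast
  have V_sub: "V \<subseteq> carrier G"
    using subgroup.subset[OF normal_imp_subgroup[OF V(1)]] .
  obtain v where v: "v \<in> V" "v \<noteq> \<one>"
    using V(2) subgroup.one_closed[OF normal_imp_subgroup[OF V(1)]] by blast
  then have "ord v \<noteq> 1"
    using ord_eq_1 V_sub by blast
  then obtain p where p: "Factorial_Ring.prime p" "p dvd ord v"
    using prime_factor_nat by blast
  have V_p: "p_element p w" if "w \<in> V" for w
    using abelian_subgroup_p_elements[OF V_sub V(3) v(1) p that] .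
  have "finite P"
    unfolding P_def using finite_carrier order_gt_0_iff_finite
    by (auto intro: finite_subset[of _ "{..order G}"] dest: dvd_imp_le)
  then have "card (P - {p}) \<ge> 2"
    using card_P card_Diff_singleton_if[of P p] by (simp split: if_splits)
  then obtain S where "S \<subseteq> P - {p}" "card S = 2"
    by (meson obtain_subset_with_card_n)
  then obtain q r where qr: "q \<in> P" "r \<in> P" "q \<noteq> r" "p \<noteq> q" "p \<noteq> r"
    by (auto simp: card_2_iff)
  then have q: "Factorial_Ring.prime q" "q dvd order G" and r: "Factorial_Ring.prime r" "r dvd order G"
    unfolding P_def by simp_all
  show False
  proof (rule exists_separating_normal_subgroup[OF assms q r qr(3)])
    fix M assume "M \<lhd> G" "q dvd card M" "\<not> r dvd card M"
    then show False
      using abelian_normal_p_subgroup_trivial_if_separated[OF V(1,3) V_p _ _ _ r(2) p(1) q(1) r(1) qr(3-5) v(1)]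
        v(2) by blast
  next
    fix M assume "M \<lhd> G" "r dvd card M" "\<not> q dvd card M"
    then show False
      using abelian_normal_p_subgroup_trivial_if_separated[OF V(1,3) V_p _ _ _ q(2) p(1) r(1) q(1)
          qr(3)[symmetric] qr(5,4) v(1)] v(2) by blast
  qed
qed

end

lemma eppo_group_if_Sigma_set_empty:
  assumes "group G" "finite (carrier G)" "Sigma_set G = {}"
  shows "eppo_group G"
proof -
  interpret group G
    by (rule assms(1))
  have "p = q"
    if x: "x \<in> carrier G" and pq: "Factorial_Ring.prime p" "Factorial_Ring.prime q" "p dvd ord x" "q dvd ord x"
    for x p q
  proof (rule ccontr)
    assume "p \<noteq> q"
    then have "num_prime_divisors (ord x) \<ge> 2"
      using num_prime_divisors_ge_2 ord_ge_1[OF assms(2) x] pq by simp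
    then have "x \<in> Sigma_set G"
      unfolding Sigma_set_def using x by simp
    then show False
      using assms(3) by simp
  qed
  then show ?thesis
    unfolding eppo_group_def eppo_group_axioms_def using assms(1,2) by blast
qed

theorem corollary2p2:
  fixes G :: "('a, 'b) monoid_scheme"
  assumes "group G" and "finite (carrier G)" and "solvable G"
    and "isolated_vertices G \<noteq> carrier G"
  shows "Sigma_set G \<noteq> {}"
proof
  assume "Sigma_set G = {}"
  then interpret eppo_group G
    using eppo_group_if_Sigma_set_empty assms(1,2) by blast
  obtain x y where "x \<in> carrier G" "tgamma_adj G x y"
    using assms(4) unfolding isolated_vertices_def by blast
  then have "num_prime_divisors (card (generate G {x, y})) \<ge> 3"
    and "subgroup (generate G {x, y}) G"
    unfolding tgamma_adj_def using generate_is_subgroup by auto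
  moreover have "card H dvd order G" if "subgroup H G" for H
    using lagrange[OF that] by (metis dvd_triv_right)
  ultimately have "num_prime_divisors (order G) \<ge> 3"
    using num_prime_divisors_mono order_gt_0_iff_finite assms(2) by (meson order_trans)
  then show False
    using solvable_num_prime_divisors_le_2[OF assms(3)] by simp
qed

end
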